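(* Under the setting and assumptions described in the context: if $\beta=0$, then $\Phi(r)\asymp\phi_1(r)\mathbf 1_{\{a_0=0\}}+r^2\mathbf 1_{\{a_0>0\}}$ for $r\in(0,1]$ and $\Phi(r)\asymp\phi_1(r)$ for $r\ge1$; if $\beta\in(0,\infty]$, then $\Phi(r)\asymp\phi_1(r)\mathbf 1_{\{a_0=0\}}+r^2\mathbf 1_{\{a_0>0\}}$ for $r\in(0,1]$ and $\Phi(r)\asymp r^2$ for $r\ge1$. Here $f\asymp g$ on a set means there is a constant $c\ge1$ with $c^{-1}g\le f\le cg$ there.
   Context: Let $d\ge1$ and let $X$ be a symmetric Lévy process on $\mathbb R^d$ with Lévy exponent $\Psi(\xi)=\sum_{i,j=1}^d a_{ij}\xi_i\xi_j+\int_{\mathbb R^d}(1-\cos(\xi\cdot y))J(y)\,dy$ (i.e. $\mathbb E_x[e^{i\xi\cdot(X_t-X_0)}]=e^{-t\Psi(\xi)}$), $A=(a_{ij})$ constant symmetric nonnegative definite, $J\ge0$ symmetric on $\mathbb R^d\setminus\{0\}$ with $\int(1\wedge|z|^2)J(z)dz<\infty$. Put $\Psi^*(r)=\sup_{|z|\le r}\Psi(z)$ and $\Phi(r)=1/\Psi^*(1/r)$ for $r>0$. Assumptions: (UJS) there is $c>0$ with $J(y)\le\frac{c}{r^d}\int_{B(0,r)}J(y-z)dz$ for all $y$ and $0<r\le|y|/2$. $\psi_1$ is increasing on $[0,\infty)$, $\psi_1(r)=1$ for $0<r\le1$, and for constants $0<b_1\le b_2$, $0<\gamma_1\le\gamma_2$,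 $\beta\in[0,\infty]$: $b_1e^{\gamma_1r^\beta}\le\psi_1(r)\le b_2e^{\gamma_2r^\beta}$ for $r>1$ (for $\beta=\infty$: $\psi_1(r)=\infty$ for $r>1$, $1/\infty=0$). $\phi_1$ is strictly increasing on $[0,\infty)$, $\phi_1(0)=0$, $\phi_1(1)=1$, and $a_3(R/r)^{\beta_1}\le\phi_1(R)/\phi_1(r)\le a_4(R/r)^{\beta_2}$ for $0<r<R$, with constants $a_3,a_4>0$, $0<\beta_1\le\beta_2<2$. There are $\gamma\ge1$, $\kappa_1,\kappa_2>0$, $a_0\ge0$ with $\gamma^{-1}a_0|\xi|^2\le\sum a_{ij}\xi_i\xi_j\le\gamma a_0|\xi|^2$ and $\gamma^{-1}\frac1{|x|^d\phi_1(|x|)\psi_1(\kappa_2|x|)}\le J(x)\le\gamma\frac1{|x|^d\phi_1(|x|)\psi_1(\kappa_1|x|)}$ for $x\ne0$. *)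

theory Defs
  imports "HOL-Analysis.Analysis" "HOL-Library.Extended_Real"
begin

definition levy_exponent :: "real^'n^'n \<Rightarrow> (real^'n \<Rightarrow> real) \<Rightarrow> real^'n \<Rightarrow> real" where
  "levy_exponent A J \<xi> = \<xi> \<bullet> (A *v \<xi>) + (\<integral>y. (1 - cos (\<xi> \<bullet> y)) * J y \<partial>lborel)"

definition Psi_star :: "real^'n^'n \<Rightarrow> (real^'n \<Rightarrow> real) \<Rightarrow> real \<Rightarrow> real" where
  "Psi_star A J r = (SUP z\<in>{z::real^'n. norm z \<le> r}. levy_exponent A J z)"

definition Phi_fun :: "real^'n^'n \<Rightarrow> (real^'n \<Rightarrow> real) \<Rightarrow> real \<Rightarrow> real" where
  "Phi_fun A J r = 1 / Psi_star A J (1 / r)"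

end

theory Submission
  imports Defs
begin

(* Psi_star is comparable to a0 \<rho>\<^sup>2 plus the truncated second moment
   G(\<rho>) = \<integral> min(1, \<rho>\<^sup>2 |y|\<^sup>2) J(y) dy.  The upper bound follows from 1 - cos t \<le> min(2, t\<^sup>2/2);
   the lower bound from testing the exponent in the coordinate directions on one annulus
   {t/2 < |y| \<le> t}, where J is bounded below by its density, since 1 - cos t \<ge> t\<^sup>2/4 for |t| \<le> 1
   and the squared coordinates add up to |y|\<^sup>2.
   Decomposing G into dyadic annuli and using the weak scaling of \<phi>1 gives G(1/s) \<lesssim> 1/\<phi>1(s):
   the inner annuli form a geometric series because \<beta>2 < 2, the outer ones because \<beta>1 > 0.
   If \<beta> > 0 the kernel decays faster than any power at infinity, so J has a finite second
   moment and G(\<rho>) \<lesssim> \<rho>\<^sup>2.  As \<phi>1(r) \<lesssim> r\<^sup>2 on (0,1] and r\<^sup>2 \<lesssim> \<phi>1(r) on [1,\<infinity>), the dominant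
   term in each regime yields the comparability of Phi(r) = 1 / Psi_star(1/r). *)

lemma one_minus_cos_le: "1 - cos (t::real) \<le> t\<^sup>2 / 2"
proof -
  have "cos t = 1 - 2 * (sin (t/2))\<^sup>2" using cos_double_sin[of "t/2"] by simp
  moreover have "(sin (t/2))\<^sup>2 \<le> (t/2)\<^sup>2"
    using abs_sin_x_le_abs_x[of "t/2"] by (metis abs_le_square_iff)
  ultimately show ?thesis by (simp add: power_divide)
qed

lemma one_minus_cos_ge:
  assumes "\<bar>t\<bar> \<le> (1::real)" shows "t\<^sup>2 / 4 \<le> 1 - cos t"
proof -
  let ?u = "\<bar>t\<bar>/2"
  have u: "0 \<le> ?u" "?u \<le> 1/2" using assms by auto
  have "\<bar>sin ?u - (\<Sum>m<3. sin_coeff m * ?u ^ m)\<bar> \<le> inverse (fact 3) * \<bar>?u\<bar> ^ 3"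
    by (rule Maclaurin_sin_bound)
  moreover have "(\<Sum>m<3. sin_coeff m * ?u ^ m) = ?u"
    by (simp add: eval_nat_numeral sin_coeff_Suc cos_coeff_Suc)
  ultimately have "\<bar>sin ?u - ?u\<bar> \<le> ?u^3/6" by (simp add: fact_numeral)
  hence "?u - ?u^3/6 \<le> sin ?u" by linarith
  moreover have "?u^3 \<le> ?u * (1/4)"
    using u mult_left_mono[OF power_mono[OF u(2) u(1), of 2] u(1)]
    by (simp add: power3_eq_cube power2_eq_square)
  ultimately have "?u * (23/24) \<le> sin ?u" by simp
  hence "(?u * (23/24))\<^sup>2 \<le> (sin ?u)\<^sup>2" using u by (intro power_mono) auto
  moreover have "cos t = 1 - 2 * (sin ?u)\<^sup>2"
    using cos_double_sin[of "?u"] by (cases "t \<ge> 0") (auto simp: abs_if)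
  moreover have "t\<^sup>2/4 \<le> 2 * (?u * (23/24))\<^sup>2" by (simp add: power_mult_distrib power_divide)
  ultimately show ?thesis by linarith
qed

lemma exp_ge_power_div:
  assumes "0 \<le> x" "0 < m"
  shows "(x / real m) ^ m \<le> exp x"
proof -
  have "x / real m \<le> exp (x / real m)" using exp_ge_add_one_self[of "x / real m"] by linarith
  hence "(x / real m) ^ m \<le> exp (x / real m) ^ m" using assms by (intro power_mono) auto
  also have "\<dots> = exp x" using assms by (simp add: exp_of_nat_mult[symmetric])
  finally show ?thesis .
qed

lemma exp_powr_dominates_power:
  fixes a b :: real
  assumes "0 < a" "0 < b"
  obtains c where "0 < c" "\<And>z. 1 \<le> z \<Longrightarrow> c * z ^ n \<le> exp (a * z powr b)"
proof
  define m where "m = Suc (nat \<lceil>n / b\<rceil>)"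
  have "real n / b \<le> real (nat \<lceil>n / b\<rceil>)" by (rule real_nat_ceiling_ge)
  hence "real n \<le> b * real (nat \<lceil>n / b\<rceil>)" using assms(2) by (metis mult.commute pos_divide_le_eq)
  hence "real n \<le> real m * b" using assms by (simp add: m_def algebra_simps)
  have "0 < m" by (simp add: m_def)
  then show "0 < (a / real m) ^ m" using assms by simp
  fix z :: real assume "1 \<le> z"
  have "(a / real m) ^ m * z ^ n \<le> (a / real m) ^ m * (z powr b) ^ m"
  proof (intro mult_left_mono)
    have "z ^ n = z powr n" using \<open>1 \<le> z\<close> by (simp add: powr_realpow)
    also have "\<dots> \<le> z powr (real m * b)" using \<open>1 \<le> z\<close> \<open>real n \<le> real m * b\<close> by (intro powr_mono) auto
    also have "\<dots> = (z powr b) ^ m" using \<open>1 \<le> z\<close> by (simp add: powr_powr[symmetric] powr_realpow mult.commute)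
    finally show "z ^ n \<le> (z powr b) ^ m" .
  qed (use assms in simp)
  also have "\<dots> = (a * z powr b / real m) ^ m" by (simp add: power_divide power_mult_distrib)
  also have "\<dots> \<le> exp (a * z powr b)" using assms \<open>0 < m\<close> by (intro exp_ge_power_div) auto
  finally show "(a / real m) ^ m * z ^ n \<le> exp (a * z powr b)" .
qed

lemma comparable_reciprocal:
  fixes g P :: "'a \<Rightarrow> real"
  assumes "0 < a" and bounds: "\<And>r. Q r \<Longrightarrow> 0 < g r \<and> a / g r \<le> P r \<and> P r \<le> b / g r"
  shows "\<exists>c\<ge>1. \<forall>r. Q r \<longrightarrow> (1/c) * g r \<le> 1 / P r \<and> 1 / P r \<le> c * g r"
proof (intro exI[of _ "max 1 (max b (1/a))"] conjI allI impI)
  fix r assume "Q r"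
  with bounds have g: "0 < g r" and lo: "a / g r \<le> P r" and up: "P r \<le> b / g r" by auto
  have P: "0 < P r" using \<open>0 < a\<close> g lo by (smt (verit) divide_pos_pos)
  have "1 / P r \<le> 1 / (a / g r)" using P lo \<open>0 < a\<close> g by (intro divide_left_mono) auto
  also have "\<dots> = (1/a) * g r" by simp
  also have "\<dots> \<le> max 1 (max b (1/a)) * g r" using g by (intro mult_right_mono) auto
  finally show "1 / P r \<le> max 1 (max b (1/a)) * g r" .
  have b: "0 < b" using P up g by (smt (verit) divide_nonpos_pos)
  have "(1 / max 1 (max b (1/a))) * g r \<le> (1 / b) * g r"
    using g b by (intro mult_right_mono divide_left_mono) auto
  also have "\<dots> = 1 / (b / g r)" by simp
  also have "\<dots> \<le> 1 / P r" using P up b g by (intro divide_left_mono) auto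
  finally show "(1 / max 1 (max b (1/a))) * g r \<le> 1 / P r" .
qed simp

section \<open>Dyadic annuli\<close>

definition annulus :: "real \<Rightarrow> 'a::real_normed_vector set" where
  "annulus a = {y. a < norm y \<and> norm y \<le> 2 * a}"

lemma annulus_eq_cball_diff: "annulus a = cball 0 (2 * a) - cball 0 a"
  by (auto simp: annulus_def)

lemma sets_annulus [measurable]: "annulus a \<in> sets (borel :: 'a::euclidean_space measure)"
  by (simp add: annulus_eq_cball_diff)

lemma annulus_nonzero: "y \<in> annulus a \<Longrightarrow> 0 \<le> a \<Longrightarrow> y \<noteq> 0"
  by (auto simp: annulus_def)

lemma measure_annulus:
  assumes "0 \<le> a"
  shows "measure lborel (annulus a :: 'a::euclidean_space set)
           = unit_ball_vol DIM('a) * a ^ DIM('a) * (2 ^ DIM('a) - 1)"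
proof -
  have "measure lborel (annulus a :: 'a set)
      = measure lborel (cball (0::'a) (2 * a)) - measure lborel (cball (0::'a) a)"
    unfolding annulus_eq_cball_diff using assms
    by (intro measure_Diff) (auto simp: emeasure_cball)
  also have "\<dots> = unit_ball_vol DIM('a) * a ^ DIM('a) * (2 ^ DIM('a) - 1)"
    using assms by (simp add: content_cball power_mult_distrib algebra_simps)
  finally show ?thesis .
qed

lemma emeasure_annulus_finite: "emeasure lborel (annulus a :: 'a::euclidean_space set) < \<infinity>"
proof -
  have "emeasure lborel (annulus a :: 'a set) \<le> emeasure lborel (cball (0::'a) (2 * a))"
    by (intro emeasure_mono) (auto simp: annulus_eq_cball_diff)
  also have "\<dots> < \<infinity>" by (cases "0 \<le> a") (auto simp: emeasure_cball)
  finally show ?thesis .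
qed

lemma outside_cball_subset_annuli:
  assumes "0 < r"
  shows "- cball 0 r \<subseteq> (\<Union>k. annulus (r * 2 ^ k) :: 'a::real_normed_vector set)"
proof
  fix y :: 'a assume "y \<in> - cball 0 r"
  then have "r < norm y" by auto
  obtain n where "norm y / r < 2 ^ n" using real_arch_pow[of 2 "norm y / r"] by auto
  define m where "m = (LEAST n. norm y / r \<le> 2 ^ n)"
  have m: "norm y / r \<le> 2 ^ m"
    unfolding m_def by (rule LeastI[of _ n]) (use \<open>norm y / r < 2 ^ n\<close> in auto)
  then obtain k where k: "m = Suc k" using assms \<open>r < norm y\<close> by (cases m) auto
  have "\<not> norm y / r \<le> 2 ^ k" using not_less_Least[of k "\<lambda>n. norm y / r \<le> 2 ^ n"] k m_def by auto
  with m k assms have "y \<in> annulus (r * 2 ^ k)" by (auto simp: annulus_def field_simps)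
  then show "y \<in> (\<Union>k. annulus (r * 2 ^ k))" by blast
qed

lemma punctured_cball_subset_annuli:
  "cball 0 r - {0} \<subseteq> (\<Union>k. annulus (r / 2 ^ Suc k) :: 'a::real_normed_vector set)"
proof
  fix y :: 'a assume y: "y \<in> cball 0 r - {0}"
  then have "0 < norm y" "norm y \<le> r" by auto
  obtain n where "r / norm y < 2 ^ n" using real_arch_pow[of 2 "r / norm y"] by auto
  define m where "m = (LEAST n. r / norm y < 2 ^ n)"
  have m: "r / norm y < 2 ^ m"
    unfolding m_def by (rule LeastI[of _ n]) (use \<open>r / norm y < 2 ^ n\<close> in auto)
  then obtain k where k: "m = Suc k" using \<open>0 < norm y\<close> \<open>norm y \<le> r\<close> by (cases m) auto
  have "\<not> r / norm y < 2 ^ k" using not_less_Least[of k "\<lambda>n. r / norm y < 2 ^ n"] k m_def by auto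
  with m k \<open>0 < norm y\<close> have "y \<in> annulus (r / 2 ^ Suc k)" by (auto simp: annulus_def field_simps)
  then show "y \<in> (\<Union>k. annulus (r / 2 ^ Suc k))" by blast
qed

lemma ennreal_le_suminf: "(f :: nat \<Rightarrow> ennreal) k \<le> suminf f"
  using sum_le_suminf[OF summableI, of "{k}" f] by simp

lemma nn_integral_annuli_le:
  fixes f :: "'a::euclidean_space \<Rightarrow> real" and r :: "nat \<Rightarrow> real"
  assumes f [measurable]: "f \<in> borel_measurable lborel"
    and cover: "S - {0} \<subseteq> (\<Union>k. annulus (r k))"
    and r: "\<And>k. 0 < r k"
    and bound: "\<And>k y. y \<in> annulus (r k) \<Longrightarrow> f y \<le> K * q ^ k / r k ^ DIM('a)"
    and K: "0 \<le> K" and q: "0 \<le> q" "q < 1"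
  shows "(\<integral>\<^sup>+y. ennreal (f y) * indicator S y \<partial>lborel)
           \<le> ennreal (K * 2 ^ DIM('a) * unit_ball_vol DIM('a) / (1 - q))"
proof -
  let ?\<omega> = "unit_ball_vol DIM('a)"
  have "(\<integral>\<^sup>+y. ennreal (f y) * indicator S y \<partial>lborel)
      \<le> (\<integral>\<^sup>+y. (\<Sum>k. ennreal (f y) * indicator (annulus (r k)) y) \<partial>lborel)"
  proof (rule nn_integral_mono_AE, use AE_lborel_singleton[of 0] in eventually_elim)
    case (elim y)
    show ?case
    proof (cases "y \<in> S")
      case True
      with cover elim obtain k where "y \<in> annulus (r k)" by blast
      hence "ennreal (f y) * indicator S y = ennreal (f y) * indicator (annulus (r k)) y"
        using True by simp
      also have "\<dots> \<le> (\<Sum>k. ennreal (f y) * indicator (annulus (r k)) y)"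
        by (rule ennreal_le_suminf)
      finally show ?thesis .
    qed simp
  qed
  also have "\<dots> = (\<Sum>k. \<integral>\<^sup>+y. ennreal (f y) * indicator (annulus (r k)) y \<partial>lborel)"
    by (rule nn_integral_suminf) simp
  also have "\<dots> \<le> (\<Sum>k. ennreal (K * 2 ^ DIM('a) * ?\<omega> * q ^ k))"
  proof (rule suminf_le)
    fix k
    have "(\<integral>\<^sup>+y. ennreal (f y) * indicator (annulus (r k)) y \<partial>lborel)
        \<le> (\<integral>\<^sup>+y. ennreal (K * q ^ k / r k ^ DIM('a)) * indicator (annulus (r k) :: 'a set) y \<partial>lborel)"
      by (intro nn_integral_mono) (auto simp: indicator_def bound ennreal_leI)
    also have "\<dots> = ennreal (K * q ^ k / r k ^ DIM('a)) * emeasure lborel (annulus (r k) :: 'a set)"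
      by (simp add: nn_integral_cmult_indicator)
    also have "\<dots> \<le> ennreal (K * q ^ k / r k ^ DIM('a)) * emeasure lborel (cball (0::'a) (2 * r k))"
      by (intro mult_left_mono emeasure_mono) (auto simp: annulus_eq_cball_diff)
    also have "\<dots> = ennreal (K * 2 ^ DIM('a) * ?\<omega> * q ^ k)"
      using r[of k] K q by (simp add: emeasure_cball ennreal_mult'[symmetric] power_mult_distrib)
    finally show "(\<integral>\<^sup>+y. ennreal (f y) * indicator (annulus (r k)) y \<partial>lborel)
        \<le> ennreal (K * 2 ^ DIM('a) * ?\<omega> * q ^ k)" .
  qed auto
  also have "\<dots> = ennreal (K * 2 ^ DIM('a) * ?\<omega> / (1 - q))"
  proof (rule suminf_ennreal_eq)
    show "(\<lambda>k. K * 2 ^ DIM('a) * ?\<omega> * q ^ k) sums (K * 2 ^ DIM('a) * ?\<omega> / (1 - q))"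
      using sums_mult[OF geometric_sums, of q "K * 2 ^ DIM('a) * ?\<omega>"] q by simp
  qed (use K q in auto)
  finally show ?thesis .
qed

lemma integral_le_split:
  fixes f :: "'a \<Rightarrow> real"
  assumes [measurable]: "f \<in> borel_measurable M" "S \<in> sets M"
    and "(\<integral>\<^sup>+x. ennreal (f x) * indicator S x \<partial>M) \<le> ennreal a"
    and "(\<integral>\<^sup>+x. ennreal (f x) * indicator (space M - S) x \<partial>M) \<le> ennreal b"
    and "0 \<le> a" "0 \<le> b"
  shows "integral\<^sup>L M f \<le> a + b"
proof (rule integral_real_bounded)
  have "(\<integral>\<^sup>+x. ennreal (f x) \<partial>M)
      = (\<integral>\<^sup>+x. ennreal (f x) * indicator S x + ennreal (f x) * indicator (space M - S) x \<partial>M)"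
    by (intro nn_integral_cong) (auto simp: indicator_def)
  also have "\<dots> = (\<integral>\<^sup>+x. ennreal (f x) * indicator S x \<partial>M)
      + (\<integral>\<^sup>+x. ennreal (f x) * indicator (space M - S) x \<partial>M)"
    by (rule nn_integral_add) auto
  also have "\<dots> \<le> ennreal (a + b)" using assms by (simp add: add_mono ennreal_plus)
  finally show "(\<integral>\<^sup>+x. ennreal (f x) \<partial>M) \<le> ennreal (a + b)" .
qed (use assms in simp)

section \<open>Weakly scaling functions\<close>

lemma powr_two_power: "((2::real) ^ k) powr b = (2 powr b) ^ k"
  by (simp add: powr_realpow[symmetric] powr_powr powr_power mult.commute)

locale weak_scaling =
  fixes \<phi> :: "real \<Rightarrow> real" and a3 a4 \<beta>1 \<beta>2 :: real
  assumes \<phi>_strict_mono: "strict_mono_on {0..} \<phi>"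
    and \<phi>_zero: "\<phi> 0 = 0" and \<phi>_one: "\<phi> 1 = 1"
    and a3_pos: "0 < a3" and \<beta>1_pos: "0 < \<beta>1" and \<beta>2_less: "\<beta>2 < 2"
    and scaling: "\<And>r R. 0 < r \<Longrightarrow> r < R \<Longrightarrow>
                    a3 * (R / r) powr \<beta>1 \<le> \<phi> R / \<phi> r \<and> \<phi> R / \<phi> r \<le> a4 * (R / r) powr \<beta>2"
begin

lemma \<phi>_pos: "0 < r \<Longrightarrow> 0 < \<phi> r"
  using \<phi>_strict_mono \<phi>_zero by (metis atLeast_iff less_eq_real_def strict_mono_onD)

lemma \<phi>_mono: "0 \<le> r \<Longrightarrow> r \<le> R \<Longrightarrow> \<phi> r \<le> \<phi> R"
  using \<phi>_strict_mono by (metis atLeast_iff order.trans order_le_less strict_mono_onD)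

lemma ratio_ge:
  assumes "0 < r" "r \<le> R"
  shows "min 1 a3 * (R / r) powr \<beta>1 * \<phi> r \<le> \<phi> R"
proof (cases "r = R")
  case True
  then show ?thesis using assms \<phi>_pos[of r] by (simp add: mult_le_cancel_right1)
next
  case False
  then have "a3 * (R / r) powr \<beta>1 \<le> \<phi> R / \<phi> r" using assms scaling[of r R] by simp
  then have "a3 * (R / r) powr \<beta>1 * \<phi> r \<le> \<phi> R" using assms \<phi>_pos[of r] by (simp add: pos_le_divide_eq)
  then show ?thesis using assms \<phi>_pos[of r] by (smt (verit) mult_right_mono min.cobounded2 powr_ge_zero zero_le_mult_iff)
qed

lemma ratio_le:
  assumes "0 < r" "r \<le> R"
  shows "\<phi> R \<le> max 1 a4 * (R / r) powr \<beta>2 * \<phi> r"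
proof (cases "r = R")
  case True
  then show ?thesis using assms \<phi>_pos[of r] by (simp add: mult_le_cancel_right1)
next
  case False
  then have "\<phi> R / \<phi> r \<le> a4 * (R / r) powr \<beta>2" using assms scaling[of r R] by simp
  then have "\<phi> R \<le> a4 * (R / r) powr \<beta>2 * \<phi> r" using assms \<phi>_pos[of r] by (simp add: pos_divide_le_eq)
  then show ?thesis using assms \<phi>_pos[of r] by (smt (verit) mult_right_mono max.cobounded2 powr_ge_zero zero_le_mult_iff)
qed

lemma le_square_ratio:
  assumes "0 < r" "r \<le> R"
  shows "\<phi> R \<le> max 1 a4 * (R / r)\<^sup>2 * \<phi> r"
proof -
  have "(R / r) powr \<beta>2 \<le> (R / r) powr 2"
    using assms \<beta>2_less by (intro powr_mono) (auto simp: field_simps)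
  also have "\<dots> = (R / r)\<^sup>2" using assms by (simp add: powr_realpow)
  finally show ?thesis
    using ratio_le[OF assms] \<phi>_pos[OF assms(1)] by (smt (verit) mult_left_mono mult_right_mono max.cobounded1)
qed

lemma inverse_le_square_small:
  assumes "0 < r" "r \<le> 1"
  shows "1 / \<phi> r \<le> max 1 a4 / r\<^sup>2"
  using le_square_ratio[OF assms] \<phi>_one \<phi>_pos[OF assms(1)] assms(1)
  by (simp add: power_divide field_simps)

lemma le_square_large:
  assumes "1 \<le> r"
  shows "\<phi> r \<le> max 1 a4 * r\<^sup>2"
  using le_square_ratio[of 1 r] assms \<phi>_one by simp

end

section \<open>Jump kernels comparable to a weakly scaling density\<close>

locale comparable_jump_kernel = weak_scaling \<phi>1 a3 a4 \<beta>1 \<beta>2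
  for \<phi>1 :: "real \<Rightarrow> real" and a3 a4 \<beta>1 \<beta>2 :: real +
  fixes A :: "real^'n^'n" and J :: "real^'n \<Rightarrow> real"
    and \<psi>1 :: "real \<Rightarrow> ereal" and \<beta> :: ereal
    and b1 b2 \<gamma>1 \<gamma>2 \<gamma> \<kappa>1 \<kappa>2 a0 :: real
  assumes A_bounds: "\<And>\<xi>. (1/\<gamma>) * a0 * (norm \<xi>)\<^sup>2 \<le> \<xi> \<bullet> (A *v \<xi>)
                      \<and> \<xi> \<bullet> (A *v \<xi>) \<le> \<gamma> * a0 * (norm \<xi>)\<^sup>2"
    and \<gamma>_ge: "1 \<le> \<gamma>" and \<kappa>1_pos: "0 < \<kappa>1" and \<kappa>2_pos: "0 < \<kappa>2" and a0_nonneg: "0 \<le> a0"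
    and J_measurable: "J \<in> borel_measurable lborel"
    and J_nonneg: "\<And>x. x \<noteq> 0 \<Longrightarrow> 0 \<le> J x"
    and J_levy: "integrable lborel (\<lambda>z. min 1 ((norm z)\<^sup>2) * J z)"
    and \<psi>1_mono: "mono_on {0..} \<psi>1"
    and \<psi>1_one: "\<And>r. 0 < r \<Longrightarrow> r \<le> 1 \<Longrightarrow> \<psi>1 r = 1"
    and b1_pos: "0 < b1" and \<gamma>1_pos: "0 < \<gamma>1"
    and \<psi>1_fin: "\<And>b r. \<beta> = ereal b \<Longrightarrow> 1 < r \<Longrightarrow>
                   ereal (b1 * exp (\<gamma>1 * r powr b)) \<le> \<psi>1 r
                 \<and> \<psi>1 r \<le> ereal (b2 * exp (\<gamma>2 * r powr b))"
    and \<psi>1_inf: "\<And>r. \<beta> = \<infinity> \<Longrightarrow> 1 < r \<Longrightarrow> \<psi>1 r = \<infinity>"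
    and J_upper: "\<And>x. x \<noteq> 0 \<Longrightarrow>
        ereal (J x) \<le> ereal \<gamma> / (ereal (norm x ^ CARD('n) * \<phi>1 (norm x)) * \<psi>1 (\<kappa>1 * norm x))"
    and J_lower: "\<And>x. x \<noteq> 0 \<Longrightarrow>
        ereal (1 / \<gamma>) / (ereal (norm x ^ CARD('n) * \<phi>1 (norm x)) * \<psi>1 (\<kappa>2 * norm x)) \<le> ereal (J x)"
begin

lemma J_measurable_borel [measurable]: "J \<in> borel_measurable borel"
  using J_measurable by simp

lemma \<psi>1_ge_one: "0 < s \<Longrightarrow> 1 \<le> \<psi>1 s"
  using \<psi>1_one[of s] \<psi>1_one[of 1] \<psi>1_mono by (cases "s \<le> 1") (auto dest: mono_onD[of _ _ 1 s])

lemma density_pos: "x \<noteq> 0 \<Longrightarrow> 0 < norm x ^ CARD('n) * \<phi>1 (norm x)"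
  using \<phi>_pos by simp

lemma J_upper_real:
  assumes "x \<noteq> 0" "ereal E \<le> \<psi>1 (\<kappa>1 * norm x)" "0 < E"
  shows "J x \<le> \<gamma> / (norm x ^ CARD('n) * \<phi>1 (norm x) * E)"
proof -
  let ?p = "norm x ^ CARD('n) * \<phi>1 (norm x)"
  have \<phi>: "0 < \<phi>1 (norm x)" and p: "0 < ?p" using \<phi>_pos density_pos assms(1) by auto
  have J: "ereal (J x) \<le> ereal \<gamma> / (ereal ?p * \<psi>1 (\<kappa>1 * norm x))" using J_upper assms(1) .
  show ?thesis
  proof (cases "\<psi>1 (\<kappa>1 * norm x)")
    case (real s)
    with J p \<phi> assms have "J x \<le> \<gamma> / (?p * s)" and "E \<le> s" by auto
    moreover have "\<gamma> / (?p * s) \<le> \<gamma> / (?p * E)"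
      using p assms \<gamma>_ge \<open>E \<le> s\<close> by (intro divide_left_mono mult_left_mono) auto
    ultimately show ?thesis by linarith
  next
    case PInf
    with J p \<phi> assms(1) have "J x \<le> 0" by simp
    also have "0 \<le> \<gamma> / (?p * E)" using p assms \<gamma>_ge by simp
    finally show ?thesis .
  next
    case MInf
    with assms show ?thesis by simp
  qed
qed

lemma J_le_density: "x \<noteq> 0 \<Longrightarrow> J x \<le> \<gamma> / (norm x ^ CARD('n) * \<phi>1 (norm x))"
  using J_upper_real[of x 1] \<psi>1_ge_one[of "\<kappa>1 * norm x"] \<kappa>1_pos by (simp add: one_ereal_def)

lemma J_le_density_at:
  assumes "0 < a" "a \<le> norm x"
  shows "J x \<le> \<gamma> / (a ^ CARD('n) * \<phi>1 a)"
proof -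
  have "x \<noteq> 0" using assms by auto
  have "a ^ CARD('n) * \<phi>1 a \<le> norm x ^ CARD('n) * \<phi>1 (norm x)"
    using assms \<phi>_pos[of a] by (intro mult_mono power_mono \<phi>_mono) auto
  moreover have "0 < a ^ CARD('n) * \<phi>1 a" using assms \<phi>_pos[of a] by simp
  ultimately have "\<gamma> / (norm x ^ CARD('n) * \<phi>1 (norm x)) \<le> \<gamma> / (a ^ CARD('n) * \<phi>1 a)"
    using density_pos[OF \<open>x \<noteq> 0\<close>] \<gamma>_ge by (intro divide_left_mono) auto
  with J_le_density[of x] assms show ?thesis by force
qed

lemma J_le_zero_far:
  assumes "\<beta> = \<infinity>" "1 < \<kappa>1 * norm x"
  shows "J x \<le> 0"
proof -
  have "x \<noteq> 0" using assms by auto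
  with J_upper[of x] \<psi>1_inf[OF assms] density_pos[of x] \<phi>_pos[of "norm x"] show ?thesis by simp
qed

lemma J_lower_real:
  assumes "x \<noteq> 0" "\<psi>1 (\<kappa>2 * norm x) \<le> ereal B"
  shows "1 / (\<gamma> * B * (norm x ^ CARD('n) * \<phi>1 (norm x))) \<le> J x"
proof -
  let ?p = "norm x ^ CARD('n) * \<phi>1 (norm x)"
  have p: "0 < ?p" using density_pos assms(1) .
  have "1 \<le> \<psi>1 (\<kappa>2 * norm x)" using \<psi>1_ge_one \<kappa>2_pos assms(1) by simp
  then obtain s where s: "\<psi>1 (\<kappa>2 * norm x) = ereal s" "1 \<le> s" "s \<le> B"
    using assms(2) by (cases "\<psi>1 (\<kappa>2 * norm x)") auto
  have "ereal ((1/\<gamma>) / (?p * s)) \<le> ereal (J x)"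
    using J_lower[OF assms(1)] s p \<phi>_pos[of "norm x"] assms(1) by simp
  then have "(1/\<gamma>) / (?p * s) \<le> J x" by simp
  moreover have "1 / (\<gamma> * B * ?p) \<le> (1/\<gamma>) / (?p * s)"
    using s p \<gamma>_ge by (simp add: field_simps mult_left_mono)
  ultimately show ?thesis by linarith
qed

lemma \<psi>1_bounded:
  assumes "0 < s" "s \<le> 1 \<or> \<beta> = 0"
  shows "\<psi>1 s \<le> ereal (max 1 (b2 * exp \<gamma>2))"
proof (cases "s \<le> 1")
  case True
  then show ?thesis using \<psi>1_one assms by (simp add: one_ereal_def)
next
  case False
  then have "\<psi>1 s \<le> ereal (b2 * exp (\<gamma>2 * s powr 0))"
    using \<psi>1_fin[of 0 s] assms by (simp add: zero_ereal_def)
  also have "\<dots> \<le> ereal (max 1 (b2 * exp \<gamma>2))" using assms by simp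
  finally show ?thesis .
qed

(* Any exponent beyond d + 2 would do: it makes the far part of the second moment a
   geometric series over dyadic annuli. *)
lemma J_decay_far:
  assumes "0 < \<beta>"
  obtains C where "0 \<le> C"
    "\<And>y. 1 \<le> norm y \<Longrightarrow> 1 < \<kappa>1 * norm y \<Longrightarrow> J y \<le> C / norm y ^ (CARD('n) + 3)"
proof (cases \<beta>)
  case (real b)
  then have "0 < b" using assms by simp
  obtain c where c: "0 < c" "\<And>z. 1 \<le> z \<Longrightarrow> c * z ^ 3 \<le> exp (\<gamma>1 * z powr b)"
    using exp_powr_dominates_power[OF \<gamma>1_pos \<open>0 < b\<close>] by blast
  show thesis
  proof
    show "0 \<le> \<gamma> / (b1 * c * \<kappa>1 ^ 3)" using \<gamma>_ge b1_pos c \<kappa>1_pos by simp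
    fix y :: "real^'n" assume "1 \<le> norm y" and far: "1 < \<kappa>1 * norm y"
    then have "y \<noteq> 0" by auto
    let ?E = "b1 * exp (\<gamma>1 * (\<kappa>1 * norm y) powr b)"
    have "J y \<le> \<gamma> / (norm y ^ CARD('n) * \<phi>1 (norm y) * ?E)"
      using J_upper_real[OF \<open>y \<noteq> 0\<close>, of ?E] \<psi>1_fin[OF real far] b1_pos by simp
    also have "\<dots> \<le> \<gamma> / (norm y ^ CARD('n) * 1 * (b1 * (c * (\<kappa>1 * norm y) ^ 3)))"
    proof (intro divide_left_mono mult_mono mult_left_mono)
      show "c * (\<kappa>1 * norm y) ^ 3 \<le> exp (\<gamma>1 * (\<kappa>1 * norm y) powr b)" using c far by simp
      show "1 \<le> \<phi>1 (norm y)" using \<phi>_mono[of 1 "norm y"] \<phi>_one \<open>1 \<le> norm y\<close> by simp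
    qed (use \<gamma>_ge b1_pos c \<kappa>1_pos \<open>y \<noteq> 0\<close> \<phi>_pos[of "norm y"] in \<open>auto intro!: mult_pos_pos\<close>)
    also have "\<dots> = \<gamma> / (b1 * c * \<kappa>1 ^ 3) / norm y ^ (CARD('n) + 3)"
      by (simp add: power_add power_mult_distrib mult_ac)
    finally show "J y \<le> \<gamma> / (b1 * c * \<kappa>1 ^ 3) / norm y ^ (CARD('n) + 3)" .
  qed
next
  case PInf
  then show thesis using that[of 0] J_le_zero_far by simp
qed (use assms in simp)

lemma J_decay_near:
  assumes "1 \<le> norm y" "\<kappa>1 * norm y \<le> 1"
  shows "J y \<le> (\<gamma> / \<kappa>1 ^ 3) / norm y ^ (CARD('n) + 3)"
proof -
  have "y \<noteq> 0" using assms by auto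
  have "J y \<le> \<gamma> / (norm y ^ CARD('n) * \<phi>1 (norm y))" using J_le_density[OF \<open>y \<noteq> 0\<close>] .
  also have "\<dots> \<le> \<gamma> / norm y ^ CARD('n)"
    using \<phi>_mono[of 1 "norm y"] \<phi>_one assms \<gamma>_ge \<open>y \<noteq> 0\<close>
    by (intro divide_left_mono) (auto simp: mult_le_cancel_left1 intro!: mult_pos_pos)
  also have "\<dots> = \<gamma> * norm y ^ 3 / norm y ^ (CARD('n) + 3)" using assms by (simp add: power_add)
  also have "\<dots> \<le> (\<gamma> / \<kappa>1 ^ 3) / norm y ^ (CARD('n) + 3)"
  proof -
    have "(\<kappa>1 * norm y) ^ 3 \<le> 1" using assms \<kappa>1_pos by (simp add: power_le_one)
    then have "norm y ^ 3 \<le> 1 / \<kappa>1 ^ 3" using \<kappa>1_pos by (simp add: field_simps power_mult_distrib)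
    then have "\<gamma> * norm y ^ 3 \<le> \<gamma> / \<kappa>1 ^ 3"
      using \<gamma>_ge mult_left_mono[of "norm y ^ 3" "1 / \<kappa>1 ^ 3" \<gamma>] by simp
    then show ?thesis by (intro divide_right_mono) auto
  qed
  finally show ?thesis .
qed

lemma J_decay:
  assumes "0 < \<beta>"
  obtains C where "0 \<le> C" "\<And>y. 1 \<le> norm y \<Longrightarrow> J y \<le> C / norm y ^ (CARD('n) + 3)"
proof -
  obtain C where C: "0 \<le> C"
    "\<And>y. 1 \<le> norm y \<Longrightarrow> 1 < \<kappa>1 * norm y \<Longrightarrow> J y \<le> C / norm y ^ (CARD('n) + 3)"
    using J_decay_far[OF assms] by blast
  show thesis
  proof
    show "0 \<le> max (\<gamma> / \<kappa>1 ^ 3) C" using C by simp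
    fix y :: "real^'n" assume "1 \<le> norm y"
    then have "J y \<le> (\<gamma> / \<kappa>1 ^ 3) / norm y ^ (CARD('n) + 3) \<or> J y \<le> C / norm y ^ (CARD('n) + 3)"
      using J_decay_near C(2) by force
    moreover have "(\<gamma> / \<kappa>1 ^ 3) / norm y ^ (CARD('n) + 3) \<le> max (\<gamma> / \<kappa>1 ^ 3) C / norm y ^ (CARD('n) + 3)"
      by (intro divide_right_mono) auto
    moreover have "C / norm y ^ (CARD('n) + 3) \<le> max (\<gamma> / \<kappa>1 ^ 3) C / norm y ^ (CARD('n) + 3)"
      by (intro divide_right_mono) auto
    ultimately show "J y \<le> max (\<gamma> / \<kappa>1 ^ 3) C / norm y ^ (CARD('n) + 3)" by linarith
  qed
qed

subsection \<open>The truncated second moment\<close>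

(* J 0 is not constrained; every integrand below carries a factor that vanishes at 0. *)
lemma mult_J_nonneg: "0 \<le> c \<Longrightarrow> (y = 0 \<Longrightarrow> c = 0) \<Longrightarrow> 0 \<le> c * J y"
  using J_nonneg by (cases "y = 0") auto

definition truncated_moment :: "real \<Rightarrow> real" where
  "truncated_moment \<rho> = (\<integral>y. min 1 (\<rho>\<^sup>2 * (norm y)\<^sup>2) * J y \<partial>lborel)"

lemma integrable_truncated: "integrable lborel (\<lambda>y. min 1 (\<rho>\<^sup>2 * (norm y)\<^sup>2) * J y)"
proof (rule Bochner_Integration.integrable_bound)
  show "integrable lborel (\<lambda>y. max 1 (\<rho>\<^sup>2) * (min 1 ((norm y)\<^sup>2) * J y))"
    using J_levy by simp
  show "AE y in lborel. norm (min 1 (\<rho>\<^sup>2 * (norm y)\<^sup>2) * J y)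
                         \<le> norm (max 1 (\<rho>\<^sup>2) * (min 1 ((norm y)\<^sup>2) * J y))"
  proof (rule AE_I2)
    fix y :: "real^'n"
    have "min 1 (\<rho>\<^sup>2 * (norm y)\<^sup>2) \<le> max 1 (\<rho>\<^sup>2) * min 1 ((norm y)\<^sup>2)"
    proof (cases "(norm y)\<^sup>2 \<le> 1")
      case True
      have "\<rho>\<^sup>2 * (norm y)\<^sup>2 \<le> max 1 (\<rho>\<^sup>2) * (norm y)\<^sup>2" by (intro mult_right_mono) auto
      then show ?thesis using True by simp
    qed auto
    then show "norm (min 1 (\<rho>\<^sup>2 * (norm y)\<^sup>2) * J y) \<le> norm (max 1 (\<rho>\<^sup>2) * (min 1 ((norm y)\<^sup>2) * J y))"
      using J_nonneg[of y] by (cases "y = 0") (auto simp: mult.assoc[symmetric] mult_right_mono)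
  qed
qed measurable

lemma one_minus_cos_le_truncated:
  assumes "norm \<xi> \<le> \<rho>"
  shows "(1 - cos (\<xi> \<bullet> y)) * J y \<le> 2 * (min 1 (\<rho>\<^sup>2 * (norm y)\<^sup>2) * J y)"
proof -
  define a where "a = \<rho>\<^sup>2 * (norm y)\<^sup>2"
  have "\<bar>\<xi> \<bullet> y\<bar> \<le> \<rho> * norm y"
    using Cauchy_Schwarz_ineq2[of \<xi> y] assms by (meson mult_right_mono norm_ge_zero order.trans)
  then have "(\<xi> \<bullet> y)\<^sup>2 \<le> a"
    unfolding a_def by (metis abs_ge_zero power_mono power_mult_distrib power2_abs)
  moreover have "1 - cos (\<xi> \<bullet> y) \<le> 2" using cos_ge_minus_one[of "\<xi> \<bullet> y"] by linarith
  moreover have "0 \<le> a" by (simp add: a_def)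
  ultimately have "1 - cos (\<xi> \<bullet> y) \<le> 2 * min 1 a"
    using one_minus_cos_le[of "\<xi> \<bullet> y"] by (auto simp: min_def)
  then show ?thesis
    unfolding a_def using J_nonneg[of y]
    by (cases "y = 0") (auto simp: mult.assoc[symmetric] mult_right_mono)
qed

lemma integrable_jump_part: "integrable lborel (\<lambda>y. (1 - cos (\<xi> \<bullet> y)) * J y)"
proof (rule Bochner_Integration.integrable_bound)
  show "integrable lborel (\<lambda>y. 2 * (min 1 ((norm \<xi>)\<^sup>2 * (norm y)\<^sup>2) * J y))"
    using integrable_truncated by simp
  show "AE y in lborel. norm ((1 - cos (\<xi> \<bullet> y)) * J y)
                         \<le> norm (2 * (min 1 ((norm \<xi>)\<^sup>2 * (norm y)\<^sup>2) * J y))"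
    using one_minus_cos_le_truncated[of \<xi> "norm \<xi>"] mult_J_nonneg
    by (intro AE_I2) (simp add: abs_of_nonneg)
qed measurable

lemma levy_exponent_le:
  assumes "norm \<xi> \<le> \<rho>"
  shows "levy_exponent A J \<xi> \<le> \<gamma> * a0 * \<rho>\<^sup>2 + 2 * truncated_moment \<rho>"
proof -
  have "\<xi> \<bullet> (A *v \<xi>) \<le> \<gamma> * a0 * (norm \<xi>)\<^sup>2" using A_bounds by blast
  also have "\<dots> \<le> \<gamma> * a0 * \<rho>\<^sup>2"
    using assms \<gamma>_ge a0_nonneg by (intro mult_left_mono power_mono) auto
  finally have "\<xi> \<bullet> (A *v \<xi>) \<le> \<gamma> * a0 * \<rho>\<^sup>2" .
  moreover have "(\<integral>y. (1 - cos (\<xi> \<bullet> y)) * J y \<partial>lborel) \<le> 2 * truncated_moment \<rho>"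
    unfolding truncated_moment_def
    using integral_mono[OF integrable_jump_part _ one_minus_cos_le_truncated[OF assms]] integrable_truncated
    by simp
  ultimately show ?thesis unfolding levy_exponent_def by linarith
qed

lemma Psi_star_le:
  assumes "0 \<le> \<rho>"
  shows "Psi_star A J \<rho> \<le> \<gamma> * a0 * \<rho>\<^sup>2 + 2 * truncated_moment \<rho>"
  unfolding Psi_star_def using assms by (intro cSUP_least) (auto intro: exI[of _ 0] levy_exponent_le)

lemma levy_exponent_le_Psi_star:
  assumes "norm \<xi> \<le> \<rho>"
  shows "levy_exponent A J \<xi> \<le> Psi_star A J \<rho>"
  unfolding Psi_star_def
proof (rule cSUP_upper)
  show "bdd_above (levy_exponent A J ` {z. norm z \<le> \<rho>})"
    by (rule bdd_aboveI2[where M = "\<gamma> * a0 * \<rho>\<^sup>2 + 2 * truncated_moment \<rho>"]) (simp add: levy_exponent_le)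
qed (use assms in simp)

lemma jump_part_le_Psi_star:
  assumes "norm \<xi> \<le> \<rho>"
  shows "(\<integral>y. (1 - cos (\<xi> \<bullet> y)) * J y \<partial>lborel) \<le> Psi_star A J \<rho>"
proof -
  have "0 \<le> \<xi> \<bullet> (A *v \<xi>)"
    using A_bounds[of \<xi>] \<gamma>_ge a0_nonneg by (smt (verit) divide_nonneg_nonneg mult_nonneg_nonneg zero_le_power2)
  then show ?thesis using levy_exponent_le_Psi_star[OF assms] unfolding levy_exponent_def by linarith
qed

lemma Psi_star_ge_quadratic:
  assumes "0 < \<rho>"
  shows "a0 / \<gamma> * \<rho>\<^sup>2 \<le> Psi_star A J \<rho>"
proof -
  let ?z = "\<rho> *\<^sub>R axis (undefined::'n) (1::real)"
  have "a0 / \<gamma> * \<rho>\<^sup>2 \<le> ?z \<bullet> (A *v ?z)" using A_bounds[of ?z] assms by simp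
  also have "\<dots> \<le> levy_exponent A J ?z"
    unfolding levy_exponent_def
    using integral_nonneg_AE[of "\<lambda>y. (1 - cos (?z \<bullet> y)) * J y" lborel] mult_J_nonneg by simp
  also have "\<dots> \<le> Psi_star A J \<rho>" using assms by (intro levy_exponent_le_Psi_star) simp
  finally show ?thesis .
qed

lemma truncated_le_J: "y \<noteq> 0 \<Longrightarrow> min 1 (\<rho>\<^sup>2 * (norm y)\<^sup>2) * J y \<le> J y"
  using J_nonneg[of y] by (auto intro: mult_left_le_one_le)

lemma truncated_le_square: "min 1 (\<rho>\<^sup>2 * (norm y)\<^sup>2) * J y \<le> \<rho>\<^sup>2 * (norm y)\<^sup>2 * J y"
  using J_nonneg[of y] by (cases "y = 0") (auto intro: mult_right_mono)

lemma truncated_inner_annulus_le: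
  assumes "0 < s" and y: "y \<in> annulus (s / 2 ^ Suc k)"
  shows "min 1 ((1/s)\<^sup>2 * (norm y)\<^sup>2) * J y
           \<le> (\<gamma> * max 1 a4 * 2 powr \<beta>2 / \<phi>1 s) * (2 powr \<beta>2 * (1/4)) ^ k / (s / 2 ^ Suc k) ^ CARD('n)"
proof -
  define r where "r = s / 2 ^ Suc k"
  define P where "P = max 1 a4 * (2 powr \<beta>2 * (2 powr \<beta>2) ^ k)"
  have "0 < r" "0 < P" using assms by (simp_all add: r_def P_def)
  have "\<phi>1 s \<le> max 1 a4 * (s / r) powr \<beta>2 * \<phi>1 r"
    using \<open>0 < s\<close> \<open>0 < r\<close> one_le_power[of "2::real" "Suc k"] by (intro ratio_le) (auto simp: r_def field_simps)
  also have "(s / r) powr \<beta>2 = 2 powr \<beta>2 * (2 powr \<beta>2) ^ k"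
    using \<open>0 < s\<close> by (simp add: r_def powr_mult powr_two_power)
  finally have \<phi>: "\<phi>1 s \<le> P * \<phi>1 r" by (simp add: P_def)
  have "min 1 ((1/s)\<^sup>2 * (norm y)\<^sup>2) * J y \<le> (1/s)\<^sup>2 * (norm y)\<^sup>2 * J y"
    by (rule truncated_le_square)
  also have "\<dots> \<le> (1/s)\<^sup>2 * (2 * r)\<^sup>2 * (\<gamma> / (r ^ CARD('n) * \<phi>1 r))"
    using y \<open>0 < r\<close> \<open>0 < s\<close> J_le_density_at[of r y] J_nonneg[OF annulus_nonzero[OF y]]
    by (intro mult_mono power_mono mult_left_mono) (auto simp: annulus_def r_def)
  also have "(1/s)\<^sup>2 * (2 * r)\<^sup>2 = (1/4) ^ k"
  proof -
    have half: "(1/s) * (2 * r) = (1/2) ^ k" using \<open>0 < s\<close> by (simp add: r_def power_divide)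
    have "(1/s)\<^sup>2 * (2 * r)\<^sup>2 = ((1/s) * (2 * r))\<^sup>2" by (rule power_mult_distrib[symmetric])
    also have "\<dots> = ((1/2)\<^sup>2) ^ k" unfolding half by (metis power_mult mult.commute)
    finally show ?thesis by (simp add: power2_eq_square)
  qed
  also have "(1/4) ^ k * (\<gamma> / (r ^ CARD('n) * \<phi>1 r))
      = \<gamma> * (1/4) ^ k * P / (r ^ CARD('n) * (P * \<phi>1 r))"
    using \<open>0 < P\<close> by simp
  also have "\<dots> \<le> \<gamma> * (1/4) ^ k * P / (r ^ CARD('n) * \<phi>1 s)"
    using \<phi> \<open>0 < P\<close> \<open>0 < r\<close> \<phi>_pos[OF \<open>0 < s\<close>] \<gamma>_ge
    by (intro divide_left_mono mult_left_mono) (auto simp: mult.commute)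
  also have "\<dots> = (\<gamma> * max 1 a4 * 2 powr \<beta>2 / \<phi>1 s) * (2 powr \<beta>2 * (1/4)) ^ k / r ^ CARD('n)"
    unfolding P_def power_mult_distrib by (simp add: field_simps)
  finally show ?thesis unfolding r_def .
qed

lemma nn_integral_truncated_inside_le:
  obtains C where "0 \<le> C" "\<And>s. 0 < s \<Longrightarrow>
    (\<integral>\<^sup>+y. ennreal (min 1 ((1/s)\<^sup>2 * (norm y)\<^sup>2) * J y) * indicator (cball 0 s) y \<partial>lborel)
      \<le> ennreal (C / \<phi>1 s)"
proof
  define q where "q = 2 powr \<beta>2 * (1/4)"
  have q: "0 \<le> q" "q < 1"
    using \<beta>2_less powr_less_mono[of \<beta>2 2 2] by (auto simp: q_def)
  define C where "C = \<gamma> * max 1 a4 * 2 powr \<beta>2 * 2 ^ CARD('n) * unit_ball_vol CARD('n) / (1 - q)"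
  show "0 \<le> C" using \<gamma>_ge q by (simp add: C_def)
  fix s :: real assume "0 < s"
  have "(\<integral>\<^sup>+y. ennreal (min 1 ((1/s)\<^sup>2 * (norm y)\<^sup>2) * J y) * indicator (cball 0 s) y \<partial>lborel)
      \<le> ennreal ((\<gamma> * max 1 a4 * 2 powr \<beta>2 / \<phi>1 s) * 2 ^ DIM(real^'n) * unit_ball_vol DIM(real^'n) / (1 - q))"
    using q \<gamma>_ge \<open>0 < s\<close> \<phi>_pos[OF \<open>0 < s\<close>] truncated_inner_annulus_le[OF \<open>0 < s\<close>]
    by (intro nn_integral_annuli_le[OF _ punctured_cball_subset_annuli]) (auto simp: q_def)
  also have "\<dots> = ennreal (C / \<phi>1 s)" by (simp add: C_def field_simps)
  finally show "(\<integral>\<^sup>+y. ennreal (min 1 ((1/s)\<^sup>2 * (norm y)\<^sup>2) * J y) * indicator (cball 0 s) y \<partial>lborel)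
      \<le> ennreal (C / \<phi>1 s)" .
qed

lemma truncated_outer_annulus_le:
  assumes "0 < s" and y: "y \<in> annulus (s * 2 ^ k)"
  shows "min 1 (\<rho>\<^sup>2 * (norm y)\<^sup>2) * J y
           \<le> (\<gamma> / (min 1 a3 * \<phi>1 s)) * (1 / 2 powr \<beta>1) ^ k / (s * 2 ^ k) ^ CARD('n)"
proof -
  define r where "r = s * 2 ^ k"
  have "0 < r" using assms by (simp add: r_def)
  have \<phi>: "min 1 a3 * (2 powr \<beta>1) ^ k * \<phi>1 s \<le> \<phi>1 r"
    using ratio_ge[OF \<open>0 < s\<close>, of r] \<open>0 < s\<close> by (simp add: r_def powr_two_power)
  have "min 1 (\<rho>\<^sup>2 * (norm y)\<^sup>2) * J y \<le> J y"
    using y \<open>0 < r\<close> by (intro truncated_le_J annulus_nonzero) (auto simp: r_def)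
  also have "\<dots> \<le> \<gamma> / (r ^ CARD('n) * \<phi>1 r)"
    using y \<open>0 < r\<close> by (intro J_le_density_at) (auto simp: annulus_def r_def)
  also have "\<dots> \<le> \<gamma> / (r ^ CARD('n) * (min 1 a3 * (2 powr \<beta>1) ^ k * \<phi>1 s))"
    using \<phi> \<open>0 < r\<close> \<phi>_pos[OF \<open>0 < s\<close>] \<phi>_pos[OF \<open>0 < r\<close>] a3_pos \<gamma>_ge
    by (intro divide_left_mono mult_left_mono) (auto intro!: mult_pos_pos)
  also have "\<dots> = (\<gamma> / (min 1 a3 * \<phi>1 s)) * (1 / 2 powr \<beta>1) ^ k / r ^ CARD('n)"
    by (simp add: power_divide field_simps)
  finally show ?thesis unfolding r_def .
qed

lemma nn_integral_truncated_outside_le: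
  obtains C where "0 \<le> C" "\<And>s \<rho>. 0 < s \<Longrightarrow>
    (\<integral>\<^sup>+y. ennreal (min 1 (\<rho>\<^sup>2 * (norm y)\<^sup>2) * J y) * indicator (- cball 0 s) y \<partial>lborel)
      \<le> ennreal (C / \<phi>1 s)"
proof
  define q where "q = 1 / 2 powr \<beta>1"
  have q: "0 \<le> q" "q < 1"
    using \<beta>1_pos powr_less_mono[of 0 \<beta>1 2] by (auto simp: q_def)
  define C where "C = \<gamma> / min 1 a3 * 2 ^ CARD('n) * unit_ball_vol CARD('n) / (1 - q)"
  show "0 \<le> C" using \<gamma>_ge q a3_pos by (simp add: C_def)
  fix s \<rho> :: real assume "0 < s"
  have "(\<integral>\<^sup>+y. ennreal (min 1 (\<rho>\<^sup>2 * (norm y)\<^sup>2) * J y) * indicator (- cball 0 s) y \<partial>lborel)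
      \<le> ennreal ((\<gamma> / (min 1 a3 * \<phi>1 s)) * 2 ^ DIM(real^'n) * unit_ball_vol DIM(real^'n) / (1 - q))"
    using q \<gamma>_ge a3_pos \<phi>_pos[OF \<open>0 < s\<close>] truncated_outer_annulus_le[OF \<open>0 < s\<close>]
    by (intro nn_integral_annuli_le[where r = "\<lambda>k. s * 2 ^ k"] order.trans[OF _ outside_cball_subset_annuli])
      (auto simp: q_def \<open>0 < s\<close>)
  also have "\<dots> = ennreal (C / \<phi>1 s)" by (simp add: C_def field_simps)
  finally show "(\<integral>\<^sup>+y. ennreal (min 1 (\<rho>\<^sup>2 * (norm y)\<^sup>2) * J y) * indicator (- cball 0 s) y \<partial>lborel)
      \<le> ennreal (C / \<phi>1 s)" .
qed

lemma truncated_moment_le_phi: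
  obtains C where "0 \<le> C" "\<And>s. 0 < s \<Longrightarrow> truncated_moment (1/s) \<le> C / \<phi>1 s"
proof -
  obtain C1 where C1: "0 \<le> C1" "\<And>s. 0 < s \<Longrightarrow>
    (\<integral>\<^sup>+y. ennreal (min 1 ((1/s)\<^sup>2 * (norm y)\<^sup>2) * J y) * indicator (cball 0 s) y \<partial>lborel)
      \<le> ennreal (C1 / \<phi>1 s)"
    using nn_integral_truncated_inside_le by blast
  obtain C2 where C2: "0 \<le> C2" "\<And>s \<rho>. 0 < s \<Longrightarrow>
    (\<integral>\<^sup>+y. ennreal (min 1 (\<rho>\<^sup>2 * (norm y)\<^sup>2) * J y) * indicator (- cball 0 s) y \<partial>lborel)
      \<le> ennreal (C2 / \<phi>1 s)"
    using nn_integral_truncated_outside_le by blast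
  show thesis
  proof
    show "0 \<le> C1 + C2" using C1 C2 by simp
    fix s :: real assume "0 < s"
    have "truncated_moment (1/s) \<le> C1 / \<phi>1 s + C2 / \<phi>1 s"
      unfolding truncated_moment_def
      using C1(2)[OF \<open>0 < s\<close>] C2(2)[OF \<open>0 < s\<close>, of "1/s"] C1(1) C2(1) \<phi>_pos[OF \<open>0 < s\<close>]
      by (intro integral_le_split[where S = "cball 0 s"]) (auto simp: Compl_eq_Diff_UNIV)
    then show "truncated_moment (1/s) \<le> (C1 + C2) / \<phi>1 s" by (simp add: add_divide_distrib)
  qed
qed

lemma Psi_star_le_phi:
  obtains C where "0 \<le> C" "\<And>r. 0 < r \<Longrightarrow> Psi_star A J (1/r) \<le> \<gamma> * a0 / r\<^sup>2 + C / \<phi>1 r"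
proof -
  obtain C where C: "0 \<le> C" "\<And>s. 0 < s \<Longrightarrow> truncated_moment (1/s) \<le> C / \<phi>1 s"
    using truncated_moment_le_phi by blast
  show thesis
  proof (rule that[of "2 * C"])
    fix r :: real assume "0 < r"
    then show "Psi_star A J (1/r) \<le> \<gamma> * a0 / r\<^sup>2 + 2 * C / \<phi>1 r"
      using Psi_star_le[of "1/r"] C(2)[of r] by (simp add: power_divide)
  qed (use C in simp)
qed

lemma truncated_far_annulus_le:
  assumes D: "0 \<le> D" "\<And>y. 1 \<le> norm y \<Longrightarrow> J y \<le> D / norm y ^ (CARD('n) + 3)"
    and y: "y \<in> annulus (2 ^ k)"
  shows "min 1 (\<rho>\<^sup>2 * (norm y)\<^sup>2) * J y \<le> (\<rho>\<^sup>2 * D) * (1/2) ^ k / (2 ^ k) ^ DIM(real^'n)"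
proof -
  have "2 ^ k \<le> norm y" using y by (auto simp: annulus_def)
  then have y1: "1 \<le> norm y" using one_le_power[of "2::real" k] by linarith
  then have "0 < norm y" by linarith
  have "min 1 (\<rho>\<^sup>2 * (norm y)\<^sup>2) * J y \<le> \<rho>\<^sup>2 * (norm y)\<^sup>2 * J y" by (rule truncated_le_square)
  also have "\<dots> \<le> \<rho>\<^sup>2 * (norm y)\<^sup>2 * (D / norm y ^ (CARD('n) + 3))"
    using D(2)[OF y1] by (intro mult_left_mono) auto
  also have "\<dots> = \<rho>\<^sup>2 * D / norm y ^ (CARD('n) + 1)"
    using y1 by (simp add: power_add power2_eq_square power3_eq_cube field_simps)
  also have "\<dots> \<le> \<rho>\<^sup>2 * D / (2 ^ k) ^ (CARD('n) + 1)"
    using \<open>2 ^ k \<le> norm y\<close> \<open>0 < norm y\<close> D(1) by (intro divide_left_mono power_mono) auto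
  also have "\<dots> = (\<rho>\<^sup>2 * D) * (1/2) ^ k / (2 ^ k) ^ DIM(real^'n)"
    by (simp add: power_add power_divide field_simps)
  finally show ?thesis .
qed

lemma nn_integral_truncated_far_le:
  assumes D: "0 \<le> D" "\<And>y. 1 \<le> norm y \<Longrightarrow> J y \<le> D / norm y ^ (CARD('n) + 3)"
  shows "(\<integral>\<^sup>+y. ennreal (min 1 (\<rho>\<^sup>2 * (norm y)\<^sup>2) * J y) * indicator (- cball 0 1) y \<partial>lborel)
           \<le> ennreal (2 * D * 2 ^ CARD('n) * unit_ball_vol CARD('n) * \<rho>\<^sup>2)"
proof -
  have "(\<integral>\<^sup>+y. ennreal (min 1 (\<rho>\<^sup>2 * (norm y)\<^sup>2) * J y) * indicator (- cball 0 1) y \<partial>lborel)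
      \<le> ennreal ((\<rho>\<^sup>2 * D) * 2 ^ DIM(real^'n) * unit_ball_vol DIM(real^'n) / (1 - 1/2))"
    using D truncated_far_annulus_le[OF D] outside_cball_subset_annuli[OF zero_less_one]
    by (intro nn_integral_annuli_le[where r = "\<lambda>k. 2 ^ k"]) auto
  also have "\<dots> = ennreal (2 * D * 2 ^ CARD('n) * unit_ball_vol CARD('n) * \<rho>\<^sup>2)"
    by (simp add: field_simps)
  finally show ?thesis .
qed

lemma nn_integral_truncated_unit_ball_le:
  "(\<integral>\<^sup>+y. ennreal (min 1 (\<rho>\<^sup>2 * (norm y)\<^sup>2) * J y) * indicator (cball 0 1) y \<partial>lborel)
     \<le> ennreal (truncated_moment 1 * \<rho>\<^sup>2)"
proof -
  have "(\<integral>\<^sup>+y. ennreal (min 1 (\<rho>\<^sup>2 * (norm y)\<^sup>2) * J y) * indicator (cball 0 1) y \<partial>lborel)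
      \<le> (\<integral>\<^sup>+y. ennreal (\<rho>\<^sup>2 * (min 1 (1\<^sup>2 * (norm y)\<^sup>2) * J y)) \<partial>lborel)"
  proof (intro nn_integral_mono)
    fix y :: "real^'n"
    have "y \<in> cball 0 1 \<Longrightarrow> min 1 (\<rho>\<^sup>2 * (norm y)\<^sup>2) * J y \<le> \<rho>\<^sup>2 * (min 1 (1\<^sup>2 * (norm y)\<^sup>2) * J y)"
      using truncated_le_square[of \<rho> y] by (simp add: power_le_one mult.assoc)
    then show "ennreal (min 1 (\<rho>\<^sup>2 * (norm y)\<^sup>2) * J y) * indicator (cball 0 1) y
        \<le> ennreal (\<rho>\<^sup>2 * (min 1 (1\<^sup>2 * (norm y)\<^sup>2) * J y))"
      by (auto simp: indicator_def ennreal_leI)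
  qed
  also have "\<dots> = ennreal (truncated_moment 1 * \<rho>\<^sup>2)"
    using integrable_truncated[of 1] mult_J_nonneg unfolding truncated_moment_def
    by (subst nn_integral_eq_integral) auto
  finally show ?thesis .
qed

lemma truncated_moment_nonneg: "0 \<le> truncated_moment \<rho>"
  unfolding truncated_moment_def using mult_J_nonneg by (intro integral_nonneg_AE) auto

lemma truncated_moment_le_square:
  assumes "0 < \<beta>"
  obtains C where "0 \<le> C" "\<And>\<rho>. truncated_moment \<rho> \<le> C * \<rho>\<^sup>2"
proof -
  obtain D where D: "0 \<le> D" "\<And>y. 1 \<le> norm y \<Longrightarrow> J y \<le> D / norm y ^ (CARD('n) + 3)"
    using J_decay[OF assms] by blast
  define M where "M = 2 * D * 2 ^ CARD('n) * unit_ball_vol CARD('n)"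
  have "0 \<le> M" using D by (simp add: M_def)
  show thesis
  proof
    show "0 \<le> truncated_moment 1 + M" using truncated_moment_nonneg \<open>0 \<le> M\<close> by simp
    fix \<rho> :: real
    have "truncated_moment \<rho> \<le> truncated_moment 1 * \<rho>\<^sup>2 + M * \<rho>\<^sup>2"
      unfolding truncated_moment_def[of \<rho>]
      using nn_integral_truncated_unit_ball_le nn_integral_truncated_far_le[OF D, of \<rho>]
        truncated_moment_nonneg[of 1] \<open>0 \<le> M\<close>
      by (intro integral_le_split[where S = "cball 0 1"]) (auto simp: Compl_eq_Diff_UNIV M_def)
    then show "truncated_moment \<rho> \<le> (truncated_moment 1 + M) * \<rho>\<^sup>2" by (simp add: algebra_simps)
  qed
qed

subsection \<open>Lower bounds for Psi_star\<close>

lemma coordinate_square_le_jump: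
  assumes "y \<in> annulus a" "0 \<le> a" "0 < \<rho>" "2 * a * \<rho> \<le> 1"
  shows "(\<rho> * y $ i)\<^sup>2 / 4 * J y \<le> (1 - cos (axis i \<rho> \<bullet> y)) * J y"
proof -
  have "\<bar>\<rho> * y $ i\<bar> \<le> \<rho> * norm y"
    using assms(3) component_le_norm_cart[of y i] by (simp add: abs_mult)
  also have "\<dots> \<le> \<rho> * (2 * a)" using assms(1,3) by (intro mult_left_mono) (auto simp: annulus_def)
  finally have "\<bar>\<rho> * y $ i\<bar> \<le> 1" using assms(4) by (simp add: mult_ac)
  then have "(\<rho> * y $ i)\<^sup>2 / 4 \<le> 1 - cos (axis i \<rho> \<bullet> y)"
    using one_minus_cos_ge by (simp add: inner_axis')
  then show ?thesis using J_nonneg[OF annulus_nonzero[OF assms(1,2)]] by (rule mult_right_mono)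
qed

lemma coordinate_integral_le_Psi_star:
  fixes i :: 'n
  assumes "0 < \<rho>" "0 \<le> a" "2 * a * \<rho> \<le> 1"
  defines "f \<equiv> \<lambda>y. indicator (annulus a) y * ((\<rho> * y $ i)\<^sup>2 / 4 * J y)"
  shows "integrable lborel f" and "(\<integral>y. f y \<partial>lborel) \<le> Psi_star A J \<rho>"
proof -
  have f_le: "f y \<le> (1 - cos (axis i \<rho> \<bullet> y)) * J y" for y
    using coordinate_square_le_jump[of y a \<rho> i] assms mult_J_nonneg[of "1 - cos (axis i \<rho> \<bullet> y)" y]
    by (auto simp: f_def indicator_def)
  have f_nonneg: "0 \<le> f y" for y
    using J_nonneg[OF annulus_nonzero, of y a] assms(2) by (auto simp: f_def indicator_def)
  have f_meas: "f \<in> borel_measurable lborel" unfolding f_def by measurable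
  show f_int: "integrable lborel f"
    using f_le f_nonneg
    by (intro Bochner_Integration.integrable_bound[OF integrable_jump_part[of "axis i \<rho>"] f_meas])
      (auto intro!: AE_I2 intro: order_trans[OF _ abs_ge_self])
  have "(\<integral>y. f y \<partial>lborel) \<le> (\<integral>y. (1 - cos (axis i \<rho> \<bullet> y)) * J y \<partial>lborel)"
    using f_int integrable_jump_part f_le by (rule integral_mono)
  also have "\<dots> \<le> Psi_star A J \<rho>"
    using assms(1) by (intro jump_part_le_Psi_star) (simp add: norm_eq_sqrt_inner inner_axis_axis)
  finally show "(\<integral>y. f y \<partial>lborel) \<le> Psi_star A J \<rho>" .
qed

lemma Psi_star_ge_annulus:
  assumes "0 < \<rho>" "0 < a" "2 * a * \<rho> \<le> 1" and m: "\<And>y. y \<in> annulus a \<Longrightarrow> m \<le> J y"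
  shows "\<rho>\<^sup>2 * a\<^sup>2 * m / 4 * measure lborel (annulus a :: (real^'n) set) \<le> CARD('n) * Psi_star A J \<rho>"
proof -
  define f where "f i y = indicator (annulus a) y * ((\<rho> * y $ i)\<^sup>2 / 4 * J y)" for i y
  have f_int: "integrable lborel (f i)" for i
    unfolding f_def using assms by (intro coordinate_integral_le_Psi_star) auto
  have "\<rho>\<^sup>2 * a\<^sup>2 * m / 4 * measure lborel (annulus a :: (real^'n) set)
      = (\<integral>y. indicator (annulus a :: (real^'n) set) y * (\<rho>\<^sup>2 * a\<^sup>2 * m / 4) \<partial>lborel)"
    using emeasure_annulus_finite by (simp add: measure_def emeasure_eq_ennreal_measure)
  also have "\<dots> \<le> (\<integral>y. (\<Sum>i\<in>UNIV. f i y) \<partial>lborel)"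
  proof (rule integral_mono)
    show "integrable lborel (\<lambda>y. indicator (annulus a :: (real^'n) set) y * (\<rho>\<^sup>2 * a\<^sup>2 * m / 4) :: real)"
      using emeasure_annulus_finite by (intro integrable_mult_left integrable_real_indicator) auto
    show "integrable lborel (\<lambda>y. \<Sum>i\<in>UNIV. f i y)" using f_int by simp
    fix y :: "real^'n"
    show "indicator (annulus a) y * (\<rho>\<^sup>2 * a\<^sup>2 * m / 4) \<le> (\<Sum>i\<in>UNIV. f i y)"
    proof (cases "y \<in> annulus a")
      case True
      have "(\<Sum>i\<in>UNIV. f i y) = \<rho>\<^sup>2 / 4 * J y * (\<Sum>i\<in>UNIV. (y $ i)\<^sup>2)"
        using True by (simp add: f_def sum_distrib_left power_mult_distrib mult_ac)
      also have "(\<Sum>i\<in>UNIV. (y $ i)\<^sup>2) = (norm y)\<^sup>2"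
        by (simp add: norm_vec_def L2_set_def real_sqrt_pow2 sum_nonneg)
      finally have "(\<Sum>i\<in>UNIV. f i y) = \<rho>\<^sup>2 / 4 * (J y * (norm y)\<^sup>2)" by simp
      moreover have "m * a\<^sup>2 \<le> J y * (norm y)\<^sup>2"
        using True m[OF True] assms(2) J_nonneg[OF annulus_nonzero[OF True]]
        by (intro mult_mono power_mono) (auto simp: annulus_def)
      then have "\<rho>\<^sup>2 / 4 * (m * a\<^sup>2) \<le> \<rho>\<^sup>2 / 4 * (J y * (norm y)\<^sup>2)" by (intro mult_left_mono) auto
      ultimately show ?thesis using True by (simp add: mult_ac)
    next
      case False
      then show ?thesis by (simp add: f_def)
    qed
  qed
  also have "\<dots> = (\<Sum>i\<in>UNIV. \<integral>y. f i y \<partial>lborel)" using f_int by simp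
  also have "\<dots> \<le> (\<Sum>i\<in>(UNIV::'n set). Psi_star A J \<rho>)"
    unfolding f_def using assms by (intro sum_mono coordinate_integral_le_Psi_star) auto
  finally show ?thesis by simp
qed

lemma Psi_star_ge_phi:
  obtains c where "0 < c" "\<And>\<rho> t. 0 < \<rho> \<Longrightarrow> 0 < t \<Longrightarrow> \<rho> * t \<le> 1 \<Longrightarrow> \<kappa>2 * t \<le> 1 \<or> \<beta> = 0 \<Longrightarrow>
    c * \<rho>\<^sup>2 * t\<^sup>2 / \<phi>1 t \<le> Psi_star A J \<rho>"
proof
  define B where "B = max 1 (b2 * exp \<gamma>2)"
  define d where "d = CARD('n)"
  have "1 \<le> B" by (simp add: B_def)
  have "0 < d" by (simp add: d_def)
  then have "(2::real) ^ 1 \<le> 2 ^ d" by (intro power_increasing) auto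
  then have "1 < (2::real) ^ d" by simp
  define c where "c = unit_ball_vol d * (2 ^ d - 1) / (16 * \<gamma> * B * 2 ^ d * d)"
  show "0 < c" using \<open>1 < 2 ^ d\<close> \<open>0 < d\<close> \<open>1 \<le> B\<close> \<gamma>_ge by (simp add: c_def)
  fix \<rho> t :: real
  assume \<rho>: "0 < \<rho>" and t: "0 < t" "\<rho> * t \<le> 1" and near: "\<kappa>2 * t \<le> 1 \<or> \<beta> = 0"
  define m where "m = 1 / (\<gamma> * B * (t ^ d * \<phi>1 t))"
  have m: "m \<le> J y" if y: "y \<in> annulus (t/2)" for y
  proof -
    have "y \<noteq> 0" and "norm y \<le> t" using y t by (auto simp: annulus_def)
    have "\<kappa>2 * norm y \<le> 1 \<or> \<beta> = 0"
      using near \<open>norm y \<le> t\<close> \<kappa>2_pos by (meson mult_left_mono less_imp_le order_trans)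
    then have "\<psi>1 (\<kappa>2 * norm y) \<le> ereal B"
      unfolding B_def using \<kappa>2_pos \<open>y \<noteq> 0\<close> by (intro \<psi>1_bounded) auto
    then have "1 / (\<gamma> * B * (norm y ^ d * \<phi>1 (norm y))) \<le> J y"
      unfolding d_def by (rule J_lower_real[OF \<open>y \<noteq> 0\<close>])
    moreover have "norm y ^ d * \<phi>1 (norm y) \<le> t ^ d * \<phi>1 t"
      using \<open>norm y \<le> t\<close> \<phi>_pos[of "norm y"] \<open>y \<noteq> 0\<close> t by (intro mult_mono power_mono \<phi>_mono) auto
    then have "m \<le> 1 / (\<gamma> * B * (norm y ^ d * \<phi>1 (norm y)))"
      unfolding m_def using \<gamma>_ge \<open>1 \<le> B\<close> density_pos[OF \<open>y \<noteq> 0\<close>]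
      by (intro divide_left_mono mult_left_mono) (auto simp: d_def)
    ultimately show ?thesis by linarith
  qed
  have "\<rho>\<^sup>2 * (t/2)\<^sup>2 * m / 4 * measure lborel (annulus (t/2) :: (real^'n) set) \<le> d * Psi_star A J \<rho>"
    unfolding d_def using \<rho> t m by (intro Psi_star_ge_annulus) (auto simp: mult.commute)
  also have "\<rho>\<^sup>2 * (t/2)\<^sup>2 * m / 4 * measure lborel (annulus (t/2) :: (real^'n) set)
      = d * (c * \<rho>\<^sup>2 * t\<^sup>2 / \<phi>1 t)"
    using t \<gamma>_ge \<open>1 \<le> B\<close> \<open>0 < d\<close> \<phi>_pos[of t]
    by (simp add: measure_annulus m_def c_def d_def power_divide field_simps)
  finally have "real d * (c * \<rho>\<^sup>2 * t\<^sup>2 / \<phi>1 t) \<le> real d * Psi_star A J \<rho>" .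
  then show "c * \<rho>\<^sup>2 * t\<^sup>2 / \<phi>1 t \<le> Psi_star A J \<rho>"
    using \<open>0 < d\<close> by (simp only: mult_le_cancel_left_pos of_nat_0_less_iff)
qed

lemma Phi_comparable_small_scales_a0_zero:
  assumes "a0 = 0"
  shows "\<exists>c\<ge>1. \<forall>r. 0 < r \<and> r \<le> 1 \<longrightarrow> (1/c) * \<phi>1 r \<le> Phi_fun A J r \<and> Phi_fun A J r \<le> c * \<phi>1 r"
proof -
  obtain C where C: "0 \<le> C" "\<And>r. 0 < r \<Longrightarrow> Psi_star A J (1/r) \<le> \<gamma> * a0 / r\<^sup>2 + C / \<phi>1 r"
    using Psi_star_le_phi by blast
  obtain c where c: "0 < c" "\<And>\<rho> t. 0 < \<rho> \<Longrightarrow> 0 < t \<Longrightarrow> \<rho> * t \<le> 1 \<Longrightarrow> \<kappa>2 * t \<le> 1 \<or> \<beta> = 0 \<Longrightarrow>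
    c * \<rho>\<^sup>2 * t\<^sup>2 / \<phi>1 t \<le> Psi_star A J \<rho>"
    using Psi_star_ge_phi by blast
  define K where "K = max 1 \<kappa>2"
  have "1 \<le> K" by (simp add: K_def)
  have "\<exists>c\<ge>1. \<forall>r. 0 < r \<and> r \<le> 1 \<longrightarrow> (1/c) * \<phi>1 r \<le> 1 / Psi_star A J (1/r) \<and> 1 / Psi_star A J (1/r) \<le> c * \<phi>1 r"
  proof (rule comparable_reciprocal[where a = "c / K\<^sup>2" and b = C])
    show "0 < c / K\<^sup>2" using c \<open>1 \<le> K\<close> by simp
    fix r :: real assume r: "0 < r \<and> r \<le> 1"
    have "\<kappa>2 * r \<le> K" using r \<kappa>2_pos mult_left_le[of r \<kappa>2] unfolding K_def by linarith
    then have "c * (1/r)\<^sup>2 * (r/K)\<^sup>2 / \<phi>1 (r/K) \<le> Psi_star A J (1/r)"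
      using r \<open>1 \<le> K\<close> by (intro c(2)) (auto simp: field_simps)
    moreover have "c * (1/r)\<^sup>2 * (r/K)\<^sup>2 = c / K\<^sup>2" using r by (simp add: power_divide)
    moreover have "r / K \<le> r" using r \<open>1 \<le> K\<close> by (simp add: divide_le_eq mult_le_cancel_left1)
    then have "c / K\<^sup>2 / \<phi>1 r \<le> c / K\<^sup>2 / \<phi>1 (r/K)"
      using r c(1) \<open>1 \<le> K\<close> \<phi>_pos[of "r/K"] \<phi>_pos[of r] \<phi>_mono[of "r/K" r]
      by (intro divide_left_mono) (auto intro!: mult_pos_pos)
    ultimately show "0 < \<phi>1 r \<and> c / K\<^sup>2 / \<phi>1 r \<le> Psi_star A J (1/r) \<and> Psi_star A J (1/r) \<le> C / \<phi>1 r"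
      using r \<phi>_pos[of r] C(2)[of r] assms by simp
  qed
  then show ?thesis by (simp add: Phi_fun_def)
qed

lemma Phi_comparable_small_scales_a0_pos:
  assumes "0 < a0"
  shows "\<exists>c\<ge>1. \<forall>r. 0 < r \<and> r \<le> 1 \<longrightarrow> (1/c) * r\<^sup>2 \<le> Phi_fun A J r \<and> Phi_fun A J r \<le> c * r\<^sup>2"
proof -
  obtain C where C: "0 \<le> C" "\<And>r. 0 < r \<Longrightarrow> Psi_star A J (1/r) \<le> \<gamma> * a0 / r\<^sup>2 + C / \<phi>1 r"
    using Psi_star_le_phi by blast
  have "\<exists>c\<ge>1. \<forall>r. 0 < r \<and> r \<le> 1 \<longrightarrow> (1/c) * r\<^sup>2 \<le> 1 / Psi_star A J (1/r) \<and> 1 / Psi_star A J (1/r) \<le> c * r\<^sup>2"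
  proof (rule comparable_reciprocal[where a = "a0 / \<gamma>" and b = "\<gamma> * a0 + C * max 1 a4"])
    show "0 < a0 / \<gamma>" using assms \<gamma>_ge by simp
    fix r :: real assume r: "0 < r \<and> r \<le> 1"
    have "C / \<phi>1 r \<le> C * (max 1 a4 / r\<^sup>2)"
      using mult_left_mono[OF inverse_le_square_small[of r] C(1)] r by simp
    then have "Psi_star A J (1/r) \<le> (\<gamma> * a0 + C * max 1 a4) / r\<^sup>2"
      using C(2)[of r] r by (simp add: add_divide_distrib)
    moreover have "a0 / \<gamma> / r\<^sup>2 \<le> Psi_star A J (1/r)"
      using Psi_star_ge_quadratic[of "1/r"] r by (simp add: power_divide)
    ultimately show "0 < r\<^sup>2 \<and> a0 / \<gamma> / r\<^sup>2 \<le> Psi_star A J (1/r) \<and> Psi_star A J (1/r) \<le> (\<gamma> * a0 + C * max 1 a4) / r\<^sup>2"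
      using r by simp
  qed
  then show ?thesis by (simp add: Phi_fun_def)
qed

lemma Phi_comparable_large_scales_\<beta>_zero:
  assumes "\<beta> = 0"
  shows "\<exists>c\<ge>1. \<forall>r\<ge>1. (1/c) * \<phi>1 r \<le> Phi_fun A J r \<and> Phi_fun A J r \<le> c * \<phi>1 r"
proof -
  obtain C where C: "0 \<le> C" "\<And>r. 0 < r \<Longrightarrow> Psi_star A J (1/r) \<le> \<gamma> * a0 / r\<^sup>2 + C / \<phi>1 r"
    using Psi_star_le_phi by blast
  obtain c where c: "0 < c" "\<And>\<rho> t. 0 < \<rho> \<Longrightarrow> 0 < t \<Longrightarrow> \<rho> * t \<le> 1 \<Longrightarrow> \<kappa>2 * t \<le> 1 \<or> \<beta> = 0 \<Longrightarrow>
    c * \<rho>\<^sup>2 * t\<^sup>2 / \<phi>1 t \<le> Psi_star A J \<rho>"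
    using Psi_star_ge_phi by blast
  have "\<exists>c\<ge>1. \<forall>r. 1 \<le> r \<longrightarrow> (1/c) * \<phi>1 r \<le> 1 / Psi_star A J (1/r) \<and> 1 / Psi_star A J (1/r) \<le> c * \<phi>1 r"
  proof (rule comparable_reciprocal[where a = c and b = "\<gamma> * a0 * max 1 a4 + C"])
    fix r :: real assume "1 \<le> r"
    then have "0 < r" "0 < \<phi>1 r" using \<phi>_pos[of r] by auto
    have "1 / r\<^sup>2 \<le> max 1 a4 / \<phi>1 r"
      using le_square_large[OF \<open>1 \<le> r\<close>] \<open>0 < r\<close> \<open>0 < \<phi>1 r\<close> by (simp add: field_simps)
    then have "\<gamma> * a0 / r\<^sup>2 \<le> \<gamma> * a0 * max 1 a4 / \<phi>1 r"
      using mult_left_mono[of "1 / r\<^sup>2" "max 1 a4 / \<phi>1 r" "\<gamma> * a0"] \<gamma>_ge a0_nonneg by simp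
    then have "Psi_star A J (1/r) \<le> (\<gamma> * a0 * max 1 a4 + C) / \<phi>1 r"
      using C(2)[OF \<open>0 < r\<close>] by (simp add: add_divide_distrib)
    moreover have "c * (1/r)\<^sup>2 * r\<^sup>2 / \<phi>1 r \<le> Psi_star A J (1/r)"
      using \<open>0 < r\<close> assms by (intro c(2)) auto
    ultimately show "0 < \<phi>1 r \<and> c / \<phi>1 r \<le> Psi_star A J (1/r) \<and> Psi_star A J (1/r) \<le> (\<gamma> * a0 * max 1 a4 + C) / \<phi>1 r"
      using \<open>0 < r\<close> \<open>0 < \<phi>1 r\<close> by (simp add: power_divide)
  qed (use c in simp)
  then show ?thesis by (simp add: Phi_fun_def)
qed

lemma Phi_comparable_large_scales_\<beta>_pos:
  assumes "0 < \<beta>"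
  shows "\<exists>c\<ge>1. \<forall>r\<ge>1. (1/c) * r\<^sup>2 \<le> Phi_fun A J r \<and> Phi_fun A J r \<le> c * r\<^sup>2"
proof -
  obtain C where C: "0 \<le> C" "\<And>\<rho>. truncated_moment \<rho> \<le> C * \<rho>\<^sup>2"
    using truncated_moment_le_square[OF assms] by blast
  obtain c where c: "0 < c" "\<And>\<rho> t. 0 < \<rho> \<Longrightarrow> 0 < t \<Longrightarrow> \<rho> * t \<le> 1 \<Longrightarrow> \<kappa>2 * t \<le> 1 \<or> \<beta> = 0 \<Longrightarrow>
    c * \<rho>\<^sup>2 * t\<^sup>2 / \<phi>1 t \<le> Psi_star A J \<rho>"
    using Psi_star_ge_phi by blast
  define K where "K = max 1 \<kappa>2"
  have "1 \<le> K" by (simp add: K_def)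
  have "\<exists>c\<ge>1. \<forall>r. 1 \<le> r \<longrightarrow> (1/c) * r\<^sup>2 \<le> 1 / Psi_star A J (1/r) \<and> 1 / Psi_star A J (1/r) \<le> c * r\<^sup>2"
  proof (rule comparable_reciprocal[where a = "c / (K\<^sup>2 * \<phi>1 (1/K))" and b = "\<gamma> * a0 + 2 * C"])
    show "0 < c / (K\<^sup>2 * \<phi>1 (1/K))" using c(1) \<open>1 \<le> K\<close> \<phi>_pos[of "1/K"] by simp
    fix r :: real assume "1 \<le> r"
    then have "0 < r" by simp
    have "Psi_star A J (1/r) \<le> \<gamma> * a0 * (1/r)\<^sup>2 + 2 * (C * (1/r)\<^sup>2)"
      using Psi_star_le[of "1/r"] C(2)[of "1/r"] \<open>0 < r\<close> by simp
    also have "\<dots> = (\<gamma> * a0 + 2 * C) / r\<^sup>2" by (simp add: power_divide add_divide_distrib)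
    finally have "Psi_star A J (1/r) \<le> (\<gamma> * a0 + 2 * C) / r\<^sup>2" .
    moreover have "c * (1/r)\<^sup>2 * (1/K)\<^sup>2 / \<phi>1 (1/K) \<le> Psi_star A J (1/r)"
      using \<open>1 \<le> r\<close> \<open>1 \<le> K\<close> \<kappa>2_pos mult_mono[OF \<open>1 \<le> r\<close> \<open>1 \<le> K\<close>]
      by (intro c(2)) (auto simp: K_def field_simps)
    ultimately show "0 < r\<^sup>2 \<and> c / (K\<^sup>2 * \<phi>1 (1/K)) / r\<^sup>2 \<le> Psi_star A J (1/r)
        \<and> Psi_star A J (1/r) \<le> (\<gamma> * a0 + 2 * C) / r\<^sup>2"
      using \<open>0 < r\<close> by (simp add: power_divide mult_ac)
  qed
  then show ?thesis by (simp add: Phi_fun_def)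
qed

end

theorem lemma5p1:
  fixes A :: "real^'n^'n" and J :: "real^'n \<Rightarrow> real"
    and \<psi>1 :: "real \<Rightarrow> ereal" and \<phi>1 :: "real \<Rightarrow> real"
    and \<beta> :: ereal
    and b1 b2 \<gamma>1 \<gamma>2 a3 a4 \<beta>1 \<beta>2 \<gamma> \<kappa>1 \<kappa>2 a0 :: real
  assumes A_sym: "transpose A = A"
    and A_bounds: "\<And>\<xi>. (1/\<gamma>) * a0 * (norm \<xi>)\<^sup>2 \<le> \<xi> \<bullet> (A *v \<xi>)
                      \<and> \<xi> \<bullet> (A *v \<xi>) \<le> \<gamma> * a0 * (norm \<xi>)\<^sup>2"
    and \<gamma>_ge: "\<gamma> \<ge> 1" and \<kappa>_pos: "\<kappa>1 > 0" "\<kappa>2 > 0" and a0_nn: "a0 \<ge> 0"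
    and J_meas: "J \<in> borel_measurable lborel"
    and J_nonneg: "\<And>x. x \<noteq> 0 \<Longrightarrow> J x \<ge> 0"
    and J_sym: "\<And>x. x \<noteq> 0 \<Longrightarrow> J (- x) = J x"
    and J_levy: "integrable lborel (\<lambda>z. min 1 ((norm z)\<^sup>2) * J z)"
    and UJS: "\<exists>c>0. \<forall>y r. 0 < r \<and> r \<le> norm y / 2 \<longrightarrow>
                 J y \<le> c / r ^ CARD('n) * (LINT z:ball 0 r|lborel. J (y - z))"
    and \<psi>1_mono: "mono_on {0..} \<psi>1"
    and \<psi>1_one: "\<And>r. 0 < r \<Longrightarrow> r \<le> 1 \<Longrightarrow> \<psi>1 r = 1"
    and consts_pos: "0 < b1" "b1 \<le> b2" "0 < \<gamma>1" "\<gamma>1 \<le> \<gamma>2"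
    and \<beta>_nn: "\<beta> \<ge> 0"
    and \<psi>1_fin: "\<And>b r. \<beta> = ereal b \<Longrightarrow> r > 1 \<Longrightarrow>
                   ereal (b1 * exp (\<gamma>1 * r powr b)) \<le> \<psi>1 r
                 \<and> \<psi>1 r \<le> ereal (b2 * exp (\<gamma>2 * r powr b))"
    and \<psi>1_inf: "\<And>r. \<beta> = \<infinity> \<Longrightarrow> r > 1 \<Longrightarrow> \<psi>1 r = \<infinity>"
    and \<phi>1_mono: "strict_mono_on {0..} \<phi>1"
    and \<phi>1_0: "\<phi>1 0 = 0" and \<phi>1_1: "\<phi>1 1 = 1"
    and scal_consts: "a3 > 0" "a4 > 0" "0 < \<beta>1" "\<beta>1 \<le> \<beta>2" "\<beta>2 < 2"
    and \<phi>1_scal: "\<And>r R. 0 < r \<Longrightarrow> r < R \<Longrightarrow>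
                    a3 * (R / r) powr \<beta>1 \<le> \<phi>1 R / \<phi>1 r \<and> \<phi>1 R / \<phi>1 r \<le> a4 * (R / r) powr \<beta>2"
    and J_upper: "\<And>x. x \<noteq> 0 \<Longrightarrow>
        ereal (J x) \<le> ereal \<gamma> / (ereal (norm x ^ CARD('n) * \<phi>1 (norm x)) * \<psi>1 (\<kappa>1 * norm x))"
    and J_lower: "\<And>x. x \<noteq> 0 \<Longrightarrow>
        ereal (1 / \<gamma>) / (ereal (norm x ^ CARD('n) * \<phi>1 (norm x)) * \<psi>1 (\<kappa>2 * norm x)) \<le> ereal (J x)"
  shows
    "(\<exists>c\<ge>1. \<forall>r. 0 < r \<and> r \<le> 1 \<longrightarrow>
         (1/c) * (if a0 = 0 then \<phi>1 r else r\<^sup>2) \<le> Phi_fun A J r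
       \<and> Phi_fun A J r \<le> c * (if a0 = 0 then \<phi>1 r else r\<^sup>2))
     \<and> (\<beta> = 0 \<longrightarrow> (\<exists>c\<ge>1. \<forall>r\<ge>1. (1/c) * \<phi>1 r \<le> Phi_fun A J r \<and> Phi_fun A J r \<le> c * \<phi>1 r))
     \<and> (\<beta> > 0 \<longrightarrow> (\<exists>c\<ge>1. \<forall>r\<ge>1. (1/c) * r\<^sup>2 \<le> Phi_fun A J r \<and> Phi_fun A J r \<le> c * r\<^sup>2))"
proof -
  interpret comparable_jump_kernel \<phi>1 a3 a4 \<beta>1 \<beta>2 A J \<psi>1 \<beta> b1 b2 \<gamma>1 \<gamma>2 \<gamma> \<kappa>1 \<kappa>2 a0
    by unfold_locales (fact assms)+
  have "\<exists>c\<ge>1. \<forall>r. 0 < r \<and> r \<le> 1 \<longrightarrow>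
         (1/c) * (if a0 = 0 then \<phi>1 r else r\<^sup>2) \<le> Phi_fun A J r
       \<and> Phi_fun A J r \<le> c * (if a0 = 0 then \<phi>1 r else r\<^sup>2)"
    using Phi_comparable_small_scales_a0_zero Phi_comparable_small_scales_a0_pos a0_nn
    by (cases "a0 = 0") auto
  then show ?thesis
    using Phi_comparable_large_scales_\<beta>_zero Phi_comparable_large_scales_\<beta>_pos by blast
qed

end
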